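(* Suppose that for every $J\subseteq S$ we are given a function $\mathrm{Irr}(W_J)\to\Gamma$, $E\mapsto a_E$, such that for every $J\subseteq S$ (regarding $(W_J,J)$ as a Coxeter group with the restricted weight function) the following hold: (A0) $a_{1_{W_J}}=0$ when $W_J=\{1\}$ (i.e. $J=\varnothing$); (A1) if $K\subsetneqq J$, $M\in\mathrm{Irr}(W_K)$, $E\in\mathrm{Irr}(W_J)$ and $E$ is a constituent of $\mathrm{Ind}_{W_K}^{W_J}M$, then $a_M\le a_E$; (A2) if $K\subsetneqq J$ and $M\in\mathrm{Irr}(W_K)$, then there is $E\in\mathrm{Irr}(W_J)$ which is a constituent of $\mathrm{Ind}_{W_K}^{W_J}M$ with $a_M=a_E$; (A3) for every $E\in\mathrm{Irr}(W_J)$ there exist $K\subsetneqq J$ and $M\in\mathrm{Irr}(W_K)$ such that either $E$ is a constituent of $\mathrm{Ind}_{W_K}^{W_J}M$ and $a_M=a_E$, or $E\otimes\mathrm{sgn}$ is a constituent of $\mathrm{Ind}_{W_K}^{W_J}M$ and $a_M=a_{E\otimes\mathrm{sgn}}$; (A4) for every $E\in\mathrm{Irr}(W_J)$, $a_{E\otimes\mathrm{sgn}}-a_E=\omega_L(E)$ (computed in $W_J$). Then $a_E=\tilde a_E$ for all $J\subseteq S$ and all $E\in\mathrm{Irr}(W_J)$; in particular for all $E\in\mathrm{Irr}(W)$.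
   Context: $(W,S)$ is a finite Coxeter group with length function $l$. $\Gamma$ is an abelian group with a total order $\le$ compatible with addition. $L\colon W\to\Gamma$ is a weight function: $L(ww')=L(w)+L(w')$ whenever $l(ww')=l(w)+l(w')$; assume $L(s)\ge 0$ for all $s\in S$. For $J\subseteq S$, $W_J$ is the parabolic subgroup generated by $J$ (a Coxeter group with generators $J$), and $L$ restricts to a weight function on it. $\mathrm{Irr}(W)$ is the set of complex irreducible representations of $W$; $\mathrm{sgn}$ is the sign representation; $1_W$ the trivial one. For a Coxeter group $(W,S)$: let $S'\subseteq S$ be a set of representatives of the conjugacy classes of $W$ contained in $T=\{wsw^{-1}\}$, and $N_s$ the size of the class of $s$; set $\omega_L(E):=\sum_{s\in S'}\frac{N_s\,\mathrm{trace}(s,E)}{\dim E}L(s)\in\Gamma$. For $M\in\mathrm{Irr}(W_J)$, write $M\uparrow E$ if $E$ is a constituent of $\mathrm{Ind}_{W_J}^W M$. Definition of $\tilde a$ (recursively over parabolic subgroups): if $W=\{1\}$, $\tilde a_{1_W}:=0$. Otherwise, assuming $\tilde a$ defined for all $W_J$, $J\subsetneqq S$, set $\tilde a'_E:=\max\{\tilde a_M\mid M\in\mathrm{Irr}(W_J),\ J\subsetneqq S,\ M\uparrow E\}$, and $\tilde a_E:=\tilde a'_E$ if $\tilde a'_{E\otimes\mathrm{sgn}}-\tilde a'_E\le\omega_L(E)$, and $\tilde a_E:=\tilde a'_{E\otimes\mathrm{sgn}}-\omega_L(E)$ otherwise. The same recursion defines $\tilde a$ on $\mathrm{Irr}(W_J)$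 for every $J\subseteq S$. *)

theory Defs
  imports Complex_Main "HOL-Algebra.Generated_Groups" "HOL-Algebra.Multiplicative_Group"
    "Jordan_Normal_Form.Matrix"
begin

definition wprod :: "('a, 'b) monoid_scheme \<Rightarrow> 'a list \<Rightarrow> 'a" where
  "wprod G ws = foldr (\<lambda>x y. x \<otimes>\<^bsub>G\<^esub> y) ws \<one>\<^bsub>G\<^esub>"

(* The presentation is expressed by its universal property, tested against all groups
   with carrier in nat (the presented group is countable, so this suffices). *)
definition coxeter_system :: "('a, 'b) monoid_scheme \<Rightarrow> 'a set \<Rightarrow> bool" where
  "coxeter_system G S \<longleftrightarrow> group G \<and> S \<subseteq> carrier G \<and> generate G S = carrier G
     \<and> \<one>\<^bsub>G\<^esub> \<notin> S \<and> (\<forall>s\<in>S. s \<otimes>\<^bsub>G\<^esub> s = \<one>\<^bsub>G\<^esub>)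
     \<and> (\<forall>(H :: nat monoid) f. group H \<and> f \<in> S \<rightarrow> carrier H
          \<and> (\<forall>s\<in>S. \<forall>t\<in>S. (f s \<otimes>\<^bsub>H\<^esub> f t) [^]\<^bsub>H\<^esub> (group.ord G (s \<otimes>\<^bsub>G\<^esub> t)) = \<one>\<^bsub>H\<^esub>)
        \<longrightarrow> (\<exists>h \<in> hom G H. \<forall>s\<in>S. h s = f s))"

definition len :: "('a, 'b) monoid_scheme \<Rightarrow> 'a set \<Rightarrow> 'a \<Rightarrow> nat" where
  "len G S w = (LEAST n. \<exists>ws. length ws = n \<and> set ws \<subseteq> S \<and> wprod G ws = w)"

definition weight_fun :: "('a, 'b) monoid_scheme \<Rightarrow> 'a set \<Rightarrow> ('a \<Rightarrow> 'g::ab_group_add) \<Rightarrow> bool" where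
  "weight_fun G S L \<longleftrightarrow> (\<forall>w\<in>carrier G. \<forall>w'\<in>carrier G.
      len G S (w \<otimes>\<^bsub>G\<^esub> w') = len G S w + len G S w' \<longrightarrow> L (w \<otimes>\<^bsub>G\<^esub> w') = L w + L w')"

definition par :: "('a, 'b) monoid_scheme \<Rightarrow> 'a set \<Rightarrow> ('a, 'b) monoid_scheme" where
  "par W J = W\<lparr>carrier := generate W J\<rparr>"

definition mtrace :: "complex mat \<Rightarrow> complex" where
  "mtrace A = (\<Sum>i<dim_row A. A $$ (i, i))"

definition is_rep :: "('a, 'b) monoid_scheme \<Rightarrow> nat \<Rightarrow> ('a \<Rightarrow> complex mat) \<Rightarrow> bool" where
  "is_rep G n \<rho> \<longleftrightarrow> (\<forall>g\<in>carrier G. \<rho> g \<in> carrier_mat n n)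
     \<and> (\<forall>g\<in>carrier G. \<forall>h\<in>carrier G. \<rho> (g \<otimes>\<^bsub>G\<^esub> h) = \<rho> g * \<rho> h)
     \<and> \<rho> \<one>\<^bsub>G\<^esub> = 1\<^sub>m n"

definition irred_rep :: "('a, 'b) monoid_scheme \<Rightarrow> nat \<Rightarrow> ('a \<Rightarrow> complex mat) \<Rightarrow> bool" where
  "irred_rep G n \<rho> \<longleftrightarrow> is_rep G n \<rho> \<and> 0 < n \<and>
     (\<forall>V. V \<subseteq> carrier_vec n \<and> 0\<^sub>v n \<in> V \<and> (\<forall>u\<in>V. \<forall>v\<in>V. u + v \<in> V)
          \<and> (\<forall>c. \<forall>u\<in>V. c \<cdot>\<^sub>v u \<in> V) \<and> (\<forall>g\<in>carrier G. \<forall>v\<in>V. \<rho> g *\<^sub>v v \<in> V)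
        \<longrightarrow> V = {0\<^sub>v n} \<or> V = carrier_vec n)"

definition character :: "('a, 'b) monoid_scheme \<Rightarrow> ('a \<Rightarrow> complex mat) \<Rightarrow> 'a \<Rightarrow> complex" where
  "character G \<rho> = (\<lambda>g. if g \<in> carrier G then mtrace (\<rho> g) else 0)"

(* Irr(G): irreducible representations up to isomorphism, identified with their characters *)
definition Irr :: "('a, 'b) monoid_scheme \<Rightarrow> ('a \<Rightarrow> complex) set" where
  "Irr G = {character G \<rho> | n \<rho>. irred_rep G n \<rho>}"

definition cinner :: "('a, 'b) monoid_scheme \<Rightarrow> ('a \<Rightarrow> complex) \<Rightarrow> ('a \<Rightarrow> complex) \<Rightarrow> complex" where
  "cinner G \<chi> \<psi> = (\<Sum>g\<in>carrier G. \<chi> g * cnj (\<psi> g)) / of_nat (card (carrier G))"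

definition ind_char :: "('a, 'b) monoid_scheme \<Rightarrow> 'a set \<Rightarrow> ('a \<Rightarrow> complex) \<Rightarrow> 'a \<Rightarrow> complex" where
  "ind_char G H \<chi> = (\<lambda>g. if g \<in> carrier G then
      (\<Sum>x\<in>carrier G. if inv\<^bsub>G\<^esub> x \<otimes>\<^bsub>G\<^esub> g \<otimes>\<^bsub>G\<^esub> x \<in> H
                         then \<chi> (inv\<^bsub>G\<^esub> x \<otimes>\<^bsub>G\<^esub> g \<otimes>\<^bsub>G\<^esub> x) else 0) / of_nat (card H)
     else 0)"

definition constituent :: "('a, 'b) monoid_scheme \<Rightarrow> 'a set \<Rightarrow> ('a \<Rightarrow> complex) \<Rightarrow> ('a \<Rightarrow> complex) \<Rightarrow> bool" where
  "constituent G H M E \<longleftrightarrow> cinner G (ind_char G H M) E \<noteq> 0"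

definition sgn_char :: "('a, 'b) monoid_scheme \<Rightarrow> 'a set \<Rightarrow> 'a \<Rightarrow> complex" where
  "sgn_char G S w = (-1) ^ len G S w"

definition tens_sgn :: "('a, 'b) monoid_scheme \<Rightarrow> 'a set \<Rightarrow> ('a \<Rightarrow> complex) \<Rightarrow> 'a \<Rightarrow> complex" where
  "tens_sgn G S E = (\<lambda>g. E g * sgn_char G S g)"

definition zsmul :: "int \<Rightarrow> 'g::ab_group_add \<Rightarrow> 'g" where
  "zsmul k x = (if 0 \<le> k then (\<Sum>i<nat k. x) else - (\<Sum>i<nat (- k). x))"

definition conj_class :: "('a, 'b) monoid_scheme \<Rightarrow> 'a \<Rightarrow> 'a set" where
  "conj_class G s = {x \<otimes>\<^bsub>G\<^esub> s \<otimes>\<^bsub>G\<^esub> inv\<^bsub>G\<^esub> x | x. x \<in> carrier G}"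

(* omega_L(E) = sum over representatives s of the conjugacy classes of reflections
   of (N_s trace(s,E) / dim E) L(s); the coefficient is an integer *)
definition omega :: "('a, 'b) monoid_scheme \<Rightarrow> 'a set \<Rightarrow> ('a \<Rightarrow> 'g::ab_group_add) \<Rightarrow> ('a \<Rightarrow> complex) \<Rightarrow> 'g" where
  "omega G S L E = (\<Sum>C \<in> conj_class G ` S.
      let s = (SOME s. s \<in> S \<and> s \<in> C)
      in zsmul (THE k::int. of_int k = of_nat (card C) * E s / E \<one>\<^bsub>G\<^esub>) (L s))"

(* at_fuel n W L J E computes atilde_E for E in Irr(W_J) whenever card J \<le> n *)
fun at_fuel :: "nat \<Rightarrow> ('a, 'b) monoid_scheme \<Rightarrow> ('a \<Rightarrow> 'g::linordered_ab_group_add)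
    \<Rightarrow> 'a set \<Rightarrow> ('a \<Rightarrow> complex) \<Rightarrow> 'g" where
  "at_fuel 0 W L J E = 0"
| "at_fuel (Suc n) W L J E = (if J = {} then 0 else
     (let a' = (\<lambda>F. Max {at_fuel n W L K M | K M. K \<subset> J \<and> M \<in> Irr (par W K)
                           \<and> constituent (par W J) (generate W K) M F});
          Es = tens_sgn (par W J) J E;
          om = omega (par W J) J L E
      in if a' Es - a' E \<le> om then a' E else a' Es - om))"

definition atilde :: "('a, 'b) monoid_scheme \<Rightarrow> ('a \<Rightarrow> 'g::linordered_ab_group_add)
    \<Rightarrow> 'a set \<Rightarrow> ('a \<Rightarrow> complex) \<Rightarrow> 'g" where
  "atilde W L J E = at_fuel (card J) W L J E"

end

theory Submission
  imports Defs "Jordan_Normal_Form.Schur_Decomposition"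
begin

(* For E in Irr(W_J), J \<noteq> {}, the recursion defining atilde reads
     atilde_E = atilde'_E                         if atilde'_{E (x) sgn} - atilde'_E <= omega_L(E),
     atilde_E = atilde'_{E (x) sgn} - omega_L(E)   otherwise,
   where atilde'_F is the maximum of the values of atilde on irreducible characters of proper
   parabolic subgroups inducing to F.  By induction on |J| we may assume a = atilde on all
   proper parabolic subgroups, so that a'_F = atilde'_F.  (A1) gives a'_F <= a_F, (A3) gives
   equality for E or for E (x) sgn, and (A4) gives a_{E (x) sgn} - a_E = omega_L(E); an
   elementary case split in an ordered group (recursion_rule_solution) shows that a_E then
   satisfies the recursion.  For the maxima to make sense the sets of values must be finite
   and nonempty, and E (x) sgn must lie in Irr(W_J). *)

section \<open>Linear algebra\<close>

lemma mtrace_comm: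
  assumes A: "(A::complex mat) \<in> carrier_mat n m" and B: "B \<in> carrier_mat m n"
  shows "mtrace (A * B) = mtrace (B * A)"
proof -
  have "mtrace (A*B) = (\<Sum>i<n. \<Sum>j<m. A$$(i,j) * B$$(j,i))"
    using assms by (simp add: mtrace_def scalar_prod_def row_def col_def atLeast0LessThan)
  also have "\<dots> = (\<Sum>j<m. \<Sum>i<n. B$$(j,i) * A$$(i,j))"
    by (subst sum.swap) (simp add: mult.commute)
  also have "\<dots> = mtrace (B*A)"
    using assms by (simp add: mtrace_def scalar_prod_def row_def col_def atLeast0LessThan)
  finally show ?thesis .
qed

lemma mtrace_smult: assumes "A \<in> carrier_mat n n" shows "mtrace (a \<cdot>\<^sub>m A) = a * mtrace A"
  using assms unfolding mtrace_def by (simp add: sum_distrib_left)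

lemma smult_mat_vec: assumes "A \<in> carrier_mat n n" "v \<in> carrier_vec n"
  shows "(a \<cdot>\<^sub>m A) *\<^sub>v v = a \<cdot>\<^sub>v (A *\<^sub>v (v :: complex vec))"
  by (rule eq_vecI) (use assms in \<open>auto simp: scalar_prod_def sum_distrib_left ac_simps\<close>)

lemma smult_smult_mat: "a \<cdot>\<^sub>m (b \<cdot>\<^sub>m (C :: complex mat)) = (a * b) \<cdot>\<^sub>m C"
  by (rule eq_matI) auto

lemma smult_mult_smult: assumes "A \<in> carrier_mat n n" "B \<in> carrier_mat n n"
  shows "(a \<cdot>\<^sub>m A) * (b \<cdot>\<^sub>m B) = (a * b) \<cdot>\<^sub>m (A * (B :: complex mat))"
proof -
  have "(a \<cdot>\<^sub>m A) * (b \<cdot>\<^sub>m B) = a \<cdot>\<^sub>m (A * (b \<cdot>\<^sub>m B))"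
    using assms by (intro mult_smult_assoc_mat) auto
  also have "A * (b \<cdot>\<^sub>m B) = b \<cdot>\<^sub>m (A * B)" using assms by (intro mult_smult_distrib) auto
  finally show ?thesis by (simp add: smult_smult_mat)
qed

lemma eigenvalue_root_of_unity:
  assumes A: "(A::complex mat) \<in> carrier_mat n n" and pw: "A ^\<^sub>m N = 1\<^sub>m n"
    and root: "poly (char_poly A) e = 0"
  shows "e^N = 1"
proof -
  obtain v where ev: "eigenvector A v e"
    using eigenvalue_root_char_poly[OF A] root unfolding eigenvalue_def by auto
  have v: "v \<in> carrier_vec n" "v \<noteq> 0\<^sub>v n" using ev A unfolding eigenvector_def by auto
  have "A ^\<^sub>m N *\<^sub>v v = e^N \<cdot>\<^sub>v v" by (rule eigenvector_pow[OF A ev])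
  hence "v = e^N \<cdot>\<^sub>v v" using pw v by simp
  moreover obtain i where i: "i < n" "v $ i \<noteq> 0"
    using v by (metis eq_vecI index_zero_vec carrier_vecD)
  ultimately have "v $ i = e^N * v $ i" by (metis index_smult_vec(1) carrier_vecD v(1))
  thus ?thesis using i by simp
qed

(* If A^N = 1 then the trace of A is a sum of n N-th roots of unity (its eigenvalues);
   this is what makes the set of character values finite. *)
lemma trace_sum_roots_of_unity:
  assumes A: "(A::complex mat) \<in> carrier_mat n n" and pw: "A ^\<^sub>m N = 1\<^sub>m n"
  shows "\<exists>es. length es = n \<and> set es \<subseteq> {z. z^N = 1} \<and> mtrace A = sum_list es"
proof -
  obtain es where cp: "char_poly A = (\<Prod>a\<leftarrow>es. [:-a,1:])" and len: "length es = n"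
    using char_poly_factorized[OF A] by blast
  obtain B P Q where sd: "schur_decomposition A es = (B,P,Q)"
    by (cases "schur_decomposition A es") auto
  from schur_decomposition[OF A cp sd] have sim: "similar_mat_wit A B P Q"
    and dg: "diag_mat B = es" by auto
  from sim A have BPQ: "B \<in> carrier_mat n n" "P \<in> carrier_mat n n" "Q \<in> carrier_mat n n"
    and QP: "Q * P = 1\<^sub>m n" and AE: "A = P * B * Q"
    unfolding similar_mat_wit_def Let_def by auto
  have "mtrace A = mtrace ((P * B) * Q)" using AE by simp
  also have "\<dots> = mtrace (Q * (P * B))" using BPQ by (intro mtrace_comm[of _ n n]) auto
  also have "Q * (P * B) = B" using QP BPQ by (simp flip: assoc_mult_mat)
  also have "mtrace B = sum_list (diag_mat B)"
    using BPQ by (simp add: mtrace_def diag_mat_def sum_list_sum_nth atLeast0LessThan)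
  also have "\<dots> = sum_list es" using dg by simp
  finally have trace: "mtrace A = sum_list es" .
  have "e^N = 1" if "e \<in> set es" for e
    using eigenvalue_root_of_unity[OF A pw] that unfolding cp
    by (induct es) (auto simp: poly_prod_list)
  thus ?thesis using len trace by blast
qed

lemma exists_orthogonal_vector:
  assumes vs: "set vs \<subseteq> carrier_vec n" and short: "length vs < n"
  shows "\<exists>u \<in> carrier_vec n. u \<noteq> 0\<^sub>v n \<and> (\<forall>w \<in> set vs. w \<bullet> (u :: complex vec) = 0)"
proof -
  define c where "c = (\<lambda>i. if i < length vs then vs ! i else 0\<^sub>v n)"
  define R where "R = mat\<^sub>r n n (\<lambda>i. if i = n - 1 then 0\<^sub>v n else c i)"
  have c: "c \<in> {0..<n} \<rightarrow> carrier_vec n" using vs unfolding c_def by (simp add: subset_iff)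
  have R: "R \<in> carrier_mat n n" unfolding R_def by simp
  have "det R = 0" unfolding R_def using det_row_0[OF _ c] short by simp
  then obtain u where u: "u \<in> carrier_vec n" "u \<noteq> 0\<^sub>v n" "R *\<^sub>v u = 0\<^sub>v n"
    using det_0_iff_vec_prod_zero_field[OF R] by blast
  have "w \<bullet> u = 0" if w: "w \<in> set vs" for w
  proof -
    obtain i where i: "i < length vs" "w = vs ! i" using w by (metis in_set_conv_nth)
    have wc: "w \<in> carrier_vec n" using w vs by blast
    have "row R i = w" unfolding R_def c_def using i short wc by (intro eq_vecI) auto
    hence "(R *\<^sub>v u) $ i = w \<bullet> u" using i short R by simp
    thus ?thesis using u(3) i short by simp
  qed
  thus ?thesis using u by blast
qed

definition annihilator :: "nat \<Rightarrow> 'a :: comm_ring vec set \<Rightarrow> 'a vec set" where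
  "annihilator n X = {u \<in> carrier_vec n. \<forall>x\<in>X. u \<bullet> x = 0}"

lemma annihilator_subspace:
  assumes X: "X \<subseteq> carrier_vec n"
  shows "0\<^sub>v n \<in> annihilator n X"
    and "u \<in> annihilator n X \<Longrightarrow> w \<in> annihilator n X \<Longrightarrow> u + w \<in> annihilator n X"
    and "u \<in> annihilator n X \<Longrightarrow> c \<cdot>\<^sub>v u \<in> annihilator n X"
proof -
  show "0\<^sub>v n \<in> annihilator n X" using X unfolding annihilator_def by auto
next
  assume u: "u \<in> annihilator n X" and w: "w \<in> annihilator n X"
  have "(u + w) \<bullet> x = 0" if x: "x \<in> X" for x
  proof -
    have "(u + w) \<bullet> x = u \<bullet> x + w \<bullet> x"
      using u w x X by (intro add_scalar_prod_distrib[of _ n]) (auto simp: annihilator_def)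
    thus ?thesis using u w x unfolding annihilator_def by simp
  qed
  thus "u + w \<in> annihilator n X" using u w unfolding annihilator_def by auto
next
  assume u: "u \<in> annihilator n X"
  have "(c \<cdot>\<^sub>v u) \<bullet> x = 0" if x: "x \<in> X" for x
    using u x X unfolding annihilator_def by auto
  thus "c \<cdot>\<^sub>v u \<in> annihilator n X" using u unfolding annihilator_def by auto
qed

lemma annihilator_transpose_stable:
  assumes A: "A \<in> carrier_mat n n" and X: "X \<subseteq> carrier_vec n"
    and stable: "\<forall>x\<in>X. A *\<^sub>v x \<in> X" and u: "u \<in> annihilator n X"
  shows "transpose_mat A *\<^sub>v u \<in> annihilator n X"
proof -
  have uc: "u \<in> carrier_vec n" using u unfolding annihilator_def by blast
  have "(transpose_mat A *\<^sub>v u) \<bullet> x = 0" if x: "x \<in> X" for x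
  proof -
    have "(transpose_mat A *\<^sub>v u) \<bullet> x = u \<bullet> (A *\<^sub>v x)"
      using transpose_vec_mult_scalar[OF A _ uc] x X by blast
    also have "\<dots> = 0" using u stable x unfolding annihilator_def by blast
    finally show ?thesis .
  qed
  moreover have "transpose_mat A *\<^sub>v u \<in> carrier_vec n" using A uc by simp
  ultimately show ?thesis unfolding annihilator_def by blast
qed

section \<open>Representations of finite groups\<close>

lemma rep_carrier: "is_rep G n \<rho> \<Longrightarrow> g \<in> carrier G \<Longrightarrow> \<rho> g \<in> carrier_mat n n"
  unfolding is_rep_def by auto

lemma rep_mult: "is_rep G n \<rho> \<Longrightarrow> g \<in> carrier G \<Longrightarrow> h \<in> carrier G \<Longrightarrow>
   \<rho> (g \<otimes>\<^bsub>G\<^esub> h) = \<rho> g * \<rho> h"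
  unfolding is_rep_def by auto

lemma rep_one: "is_rep G n \<rho> \<Longrightarrow> \<rho> \<one>\<^bsub>G\<^esub> = 1\<^sub>m n"
  unfolding is_rep_def by auto

lemma rep_pow:
  assumes G: "group G" and r: "is_rep G n \<rho>" and g: "g \<in> carrier G"
  shows "\<rho> (g [^]\<^bsub>G\<^esub> (k::nat)) = \<rho> g ^\<^sub>m k"
proof (induct k)
  case 0
  then show ?case using rep_one[OF r] rep_carrier[OF r g] by simp
next
  case (Suc k)
  have "g [^]\<^bsub>G\<^esub> Suc k = g [^]\<^bsub>G\<^esub> k \<otimes>\<^bsub>G\<^esub> g"
    using G by (simp add: group.is_monoid monoid.nat_pow_Suc)
  hence "\<rho> (g [^]\<^bsub>G\<^esub> Suc k) = \<rho> (g [^]\<^bsub>G\<^esub> k) * \<rho> g"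
    using rep_mult[OF r] g G by (simp add: group.is_monoid monoid.nat_pow_closed)
  then show ?case using Suc by simp
qed

lemma rep_orbit_stable:
  assumes G: "group G" and r: "is_rep G n \<rho>" and v: "v \<in> carrier_vec n"
    and h: "h \<in> carrier G" and x: "x \<in> (\<lambda>g. \<rho> g *\<^sub>v v) ` carrier G"
  shows "\<rho> h *\<^sub>v x \<in> (\<lambda>g. \<rho> g *\<^sub>v v) ` carrier G"
proof -
  obtain g where g: "g \<in> carrier G" "x = \<rho> g *\<^sub>v v" using x by blast
  have "\<rho> h *\<^sub>v x = \<rho> (h \<otimes>\<^bsub>G\<^esub> g) *\<^sub>v v"
    using g rep_mult[OF r h g(1)] rep_carrier[OF r h] rep_carrier[OF r g(1)] v by simp
  moreover have "h \<otimes>\<^bsub>G\<^esub> g \<in> carrier G" using G h g by (simp add: group.is_monoid monoid.m_closed)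
  ultimately show ?thesis by blast
qed

(* The double annihilator of the orbit is
   an invariant subspace containing v, hence it is the whole space. *)
lemma irred_orbit_annihilator:
  assumes G: "group G" and irr: "irred_rep G n \<rho>"
    and v: "v \<in> carrier_vec n" "v \<noteq> 0\<^sub>v n"
    and u: "u \<in> annihilator n ((\<lambda>g. \<rho> g *\<^sub>v v) ` carrier G)"
  shows "u = 0\<^sub>v n"
proof -
  have r: "is_rep G n \<rho>" using irr unfolding irred_rep_def by blast
  define orbit where "orbit = (\<lambda>g. \<rho> g *\<^sub>v v) ` carrier G"
  define V where "V = annihilator n (annihilator n orbit)"
  have orbit: "orbit \<subseteq> carrier_vec n"
    using mult_mat_vec_carrier[OF rep_carrier[OF r] v(1)] unfolding orbit_def by blast
  have Ann: "annihilator n orbit \<subseteq> carrier_vec n" unfolding annihilator_def by blast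
  have "\<rho> h *\<^sub>v w \<in> V" if h: "h \<in> carrier G" and w: "w \<in> V" for h w
  proof -
    have Rh: "\<rho> h \<in> carrier_mat n n" using rep_carrier[OF r h] .
    have "\<forall>x\<in>orbit. \<rho> h *\<^sub>v x \<in> orbit"
      using rep_orbit_stable[OF G r v(1) h] unfolding orbit_def by blast
    hence "\<forall>y\<in>annihilator n orbit. transpose_mat (\<rho> h) *\<^sub>v y \<in> annihilator n orbit"
      using annihilator_transpose_stable[OF Rh orbit] by blast
    from annihilator_transpose_stable[OF _ Ann this] show ?thesis
      using Rh w unfolding V_def by simp
  qed
  hence "V = {0\<^sub>v n} \<or> V = carrier_vec n"
  proof (intro irr[unfolded irred_rep_def, THEN conjunct2, THEN conjunct2, rule_format] conjI
      allI ballI)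
    show "V \<subseteq> carrier_vec n" unfolding V_def annihilator_def by blast
    show "0\<^sub>v n \<in> V" unfolding V_def by (rule annihilator_subspace(1)[OF Ann])
    show "x + y \<in> V" if "x \<in> V" "y \<in> V" for x y
      using annihilator_subspace(2)[OF Ann] that unfolding V_def .
    show "c \<cdot>\<^sub>v x \<in> V" if "x \<in> V" for c x
      using annihilator_subspace(3)[OF Ann] that unfolding V_def .
  qed
  moreover have "v \<in> V"
  proof -
    have one: "\<one>\<^bsub>G\<^esub> \<in> carrier G" using G by (simp add: group.is_monoid monoid.one_closed)
    hence "v \<in> orbit" using rep_one[OF r] v unfolding orbit_def by force
    hence "v \<bullet> y = 0" if "y \<in> annihilator n orbit" for y
      using that v comm_scalar_prod[of v n y] unfolding annihilator_def by auto
    thus ?thesis using v unfolding V_def annihilator_def by blast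
  qed
  ultimately have V: "V = carrier_vec n" using v by auto
  have uc: "u \<in> carrier_vec n" using u unfolding annihilator_def by blast
  have "u $ i = 0" if i: "i < n" for i
  proof -
    have "unit_vec n i \<in> V" using V by simp
    hence "unit_vec n i \<bullet> u = 0" using u unfolding V_def orbit_def annihilator_def by blast
    thus ?thesis using scalar_prod_left_unit[OF uc i] by simp
  qed
  thus ?thesis using uc by (intro eq_vecI) auto
qed

lemma irred_dim_le:
  assumes G: "group G" and fin: "finite (carrier G)" and irr: "irred_rep G n \<rho>"
  shows "n \<le> card (carrier G)"
proof (rule ccontr)
  assume "\<not> n \<le> card (carrier G)"
  hence small: "card (carrier G) < n" by simp
  have r: "is_rep G n \<rho>" and n0: "0 < n" using irr unfolding irred_rep_def by auto
  define v :: "complex vec" where "v = unit_vec n 0"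
  have v: "v \<in> carrier_vec n" "v \<noteq> 0\<^sub>v n" using n0 unfolding v_def by auto
  obtain gs where gs: "set gs = carrier G" "distinct gs" using finite_distinct_list[OF fin] by blast
  define vs where "vs = map (\<lambda>g. \<rho> g *\<^sub>v v) gs"
  have orbit: "\<rho> g *\<^sub>v v \<in> carrier_vec n" if "g \<in> carrier G" for g
    using mult_mat_vec_carrier[OF rep_carrier[OF r that] v(1)] .
  have "set vs \<subseteq> carrier_vec n" using gs orbit unfolding vs_def by auto
  moreover have "length vs < n" using small gs distinct_card[of gs] unfolding vs_def by simp
  ultimately obtain u where u: "u \<in> carrier_vec n" "u \<noteq> 0\<^sub>v n" "\<forall>w\<in>set vs. w \<bullet> u = 0"
    using exists_orthogonal_vector by blast
  have "u \<in> annihilator n ((\<lambda>g. \<rho> g *\<^sub>v v) ` carrier G)"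
    using u gs orbit comm_scalar_prod[of u n] unfolding vs_def annihilator_def by fastforce
  thus False using irred_orbit_annihilator[OF G irr v] u(2) by blast
qed

lemma irred_char_value:
  assumes G: "group G" and fin: "finite (carrier G)" and irr: "irred_rep G n \<rho>"
    and g: "g \<in> carrier G"
  shows "character G \<rho> g \<in> {sum_list es | es. length es \<le> card (carrier G) \<and>
            set es \<subseteq> {z. z ^ card (carrier G) = 1}}"
proof -
  have r: "is_rep G n \<rho>" using irr unfolding irred_rep_def by blast
  have "g [^]\<^bsub>G\<^esub> Coset.order G = \<one>\<^bsub>G\<^esub>" using group.pow_order_eq_1[OF G g] .
  hence "\<rho> g ^\<^sub>m card (carrier G) = 1\<^sub>m n"
    using rep_pow[OF G r g, of "card (carrier G)"] rep_one[OF r] unfolding Coset.order_def by simp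
  from trace_sum_roots_of_unity[OF rep_carrier[OF r g] this] obtain es where
    es: "length es = n" "set es \<subseteq> {z. z ^ card (carrier G) = 1}" "mtrace (\<rho> g) = sum_list es"
    by blast
  moreover have "n \<le> card (carrier G)" by (rule irred_dim_le[OF G fin irr])
  moreover have "character G \<rho> g = mtrace (\<rho> g)" unfolding character_def using g by simp
  ultimately show ?thesis by (intro CollectI exI[of _ es]) simp
qed

lemma finite_Irr:
  assumes G: "group G" and fin: "finite (carrier G)"
  shows "finite (Irr G)"
proof -
  define c where "c = card (carrier G)"
  have "\<one>\<^bsub>G\<^esub> \<in> carrier G" using G by (simp add: group.is_monoid monoid.one_closed)
  hence c0: "c > 0" using fin unfolding c_def card_gt_0_iff by blast
  define T where "T = sum_list ` {es. set es \<subseteq> {z::complex. z ^ c = 1} \<and> length es \<le> c}"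
  have fT: "finite T"
    unfolding T_def by (intro finite_imageI finite_lists_length_le) (use c0 finite_roots_unity in auto)
  define F where "F = (\<lambda>h g. if g \<in> carrier G then h g else 0) ` (carrier G \<rightarrow>\<^sub>E T)"
  have fF: "finite F" unfolding F_def using fT fin by (intro finite_imageI finite_PiE) auto
  have "Irr G \<subseteq> F"
  proof
    fix \<chi> assume "\<chi> \<in> Irr G"
    then obtain n \<rho> where irr: "irred_rep G n \<rho>" and ch: "\<chi> = character G \<rho>"
      unfolding Irr_def by blast
    have "\<forall>g\<in>carrier G. \<chi> g \<in> T"
      using irred_char_value[OF G fin irr] unfolding ch T_def c_def by blast
    hence "restrict \<chi> (carrier G) \<in> carrier G \<rightarrow>\<^sub>E T" by (simp add: restrict_PiE_iff)
    moreover have "\<chi> = (\<lambda>g. if g \<in> carrier G then restrict \<chi> (carrier G) g else 0)"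
      unfolding ch character_def by auto
    ultimately show "\<chi> \<in> F" unfolding F_def by blast
  qed
  thus ?thesis using fF by (rule finite_subset)
qed

lemma twist_is_rep:
  assumes r: "is_rep G n \<rho>"
    and em: "\<forall>x\<in>carrier G. \<forall>y\<in>carrier G. \<epsilon> (x \<otimes>\<^bsub>G\<^esub> y) = \<epsilon> x * \<epsilon> y"
    and e1: "\<epsilon> \<one>\<^bsub>G\<^esub> = (1::complex)"
  shows "is_rep G n (\<lambda>g. \<epsilon> g \<cdot>\<^sub>m \<rho> g)"
  unfolding is_rep_def
proof (intro conjI ballI)
  fix g assume "g \<in> carrier G"
  thus "\<epsilon> g \<cdot>\<^sub>m \<rho> g \<in> carrier_mat n n" using rep_carrier[OF r] by simp
next
  fix g h assume g: "g \<in> carrier G" and h: "h \<in> carrier G"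
  have Rg: "\<rho> g \<in> carrier_mat n n" and Rh: "\<rho> h \<in> carrier_mat n n"
    using rep_carrier[OF r] g h by auto
  show "\<epsilon> (g \<otimes>\<^bsub>G\<^esub> h) \<cdot>\<^sub>m \<rho> (g \<otimes>\<^bsub>G\<^esub> h) = \<epsilon> g \<cdot>\<^sub>m \<rho> g * (\<epsilon> h \<cdot>\<^sub>m \<rho> h)"
    using em g h rep_mult[OF r g h] smult_mult_smult[OF Rg Rh] by simp
next
  show "\<epsilon> \<one>\<^bsub>G\<^esub> \<cdot>\<^sub>m \<rho> \<one>\<^bsub>G\<^esub> = 1\<^sub>m n" using e1 rep_one[OF r] by (intro eq_matI) auto
qed

(* If moreover \<epsilon> takes values \<plusminus>1, twisting preserves irreducibility: the twisted and
   the original representation have the same invariant subspaces. *)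
lemma twist_irred:
  assumes irr: "irred_rep G n \<rho>"
    and em: "\<forall>x\<in>carrier G. \<forall>y\<in>carrier G. \<epsilon> (x \<otimes>\<^bsub>G\<^esub> y) = \<epsilon> x * \<epsilon> y"
    and e1: "\<epsilon> \<one>\<^bsub>G\<^esub> = (1::complex)" and eq: "\<forall>x\<in>carrier G. \<epsilon> x * \<epsilon> x = 1"
  shows "irred_rep G n (\<lambda>g. \<epsilon> g \<cdot>\<^sub>m \<rho> g)"
proof -
  have r: "is_rep G n \<rho>" and n0: "0 < n" using irr unfolding irred_rep_def by blast+
  have VP: "\<And>V. V \<subseteq> carrier_vec n \<Longrightarrow> 0\<^sub>v n \<in> V \<Longrightarrow> (\<forall>u\<in>V. \<forall>v\<in>V. u + v \<in> V)
          \<Longrightarrow> (\<forall>c. \<forall>u\<in>V. c \<cdot>\<^sub>v u \<in> V) \<Longrightarrow> (\<forall>g\<in>carrier G. \<forall>v\<in>V. \<rho> g *\<^sub>v v \<in> V)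
        \<Longrightarrow> V = {0\<^sub>v n} \<or> V = carrier_vec n"
    using irr[unfolded irred_rep_def, THEN conjunct2, THEN conjunct2, rule_format] by blast
  have rep: "is_rep G n (\<lambda>g. \<epsilon> g \<cdot>\<^sub>m \<rho> g)" using twist_is_rep[OF r em e1] .
  show ?thesis unfolding irred_rep_def
  proof (intro conjI allI impI rep n0)
    fix V assume "V \<subseteq> carrier_vec n \<and> 0\<^sub>v n \<in> V \<and> (\<forall>u\<in>V. \<forall>v\<in>V. u + v \<in> V) \<and>
      (\<forall>c. \<forall>u\<in>V. c \<cdot>\<^sub>v u \<in> V) \<and> (\<forall>g\<in>carrier G. \<forall>v\<in>V. (\<epsilon> g \<cdot>\<^sub>m \<rho> g) *\<^sub>v v \<in> V)"
    hence V: "V \<subseteq> carrier_vec n" "0\<^sub>v n \<in> V" "\<forall>u\<in>V. \<forall>v\<in>V. u + v \<in> V"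
      "\<forall>c. \<forall>u\<in>V. c \<cdot>\<^sub>v u \<in> V" and inv: "\<forall>g\<in>carrier G. \<forall>v\<in>V. (\<epsilon> g \<cdot>\<^sub>m \<rho> g) *\<^sub>v v \<in> V"
      by blast+
    have "\<rho> g *\<^sub>v v \<in> V" if g: "g \<in> carrier G" and v: "v \<in> V" for g v
    proof -
      have Rg: "\<rho> g \<in> carrier_mat n n" using rep_carrier[OF r g] .
      have vc: "v \<in> carrier_vec n" using v V by auto
      have "\<epsilon> g \<cdot>\<^sub>v ((\<epsilon> g \<cdot>\<^sub>m \<rho> g) *\<^sub>v v) = \<epsilon> g \<cdot>\<^sub>v (\<epsilon> g \<cdot>\<^sub>v (\<rho> g *\<^sub>v v))"
        using smult_mat_vec[OF Rg vc] by simp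
      also have "\<dots> = \<rho> g *\<^sub>v v" using eq g Rg vc
        by (intro eq_vecI) (auto simp: mult.assoc[symmetric])
      finally show ?thesis using V(4) inv g v by metis
    qed
    thus "V = {0\<^sub>v n} \<or> V = carrier_vec n" using VP[OF V] by blast
  qed
qed

section \<open>The trivial subgroup\<close>

lemma (in group) conj_one_iff:
  assumes x: "x \<in> carrier G" and g: "g \<in> carrier G"
  shows "(inv x \<otimes> g \<otimes> x = \<one>) = (g = \<one>)"
proof
  assume h: "inv x \<otimes> g \<otimes> x = \<one>"
  have "g = x \<otimes> (inv x \<otimes> g \<otimes> x) \<otimes> inv x" using x g by (simp add: m_assoc flip: m_assoc[of x "inv x"])
  also have "\<dots> = \<one>" using h x by simp
  finally show "g = \<one>" .
qed (use x in simp)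

lemma irred_char_at_one:
  assumes irr: "irred_rep G n \<rho>" and G: "group G"
  shows "character G \<rho> \<one>\<^bsub>G\<^esub> = of_nat n"
proof -
  have "\<one>\<^bsub>G\<^esub> \<in> carrier G" using G by (simp add: group.is_monoid monoid.one_closed)
  thus ?thesis using irr unfolding character_def mtrace_def irred_rep_def is_rep_def by simp
qed

lemma trivial_rep_irred: "irred_rep G 1 (\<lambda>_. 1\<^sub>m 1)"
  unfolding irred_rep_def is_rep_def
proof (intro conjI ballI allI impI)
  fix V :: "complex vec set"
  assume V: "V \<subseteq> carrier_vec 1 \<and> 0\<^sub>v 1 \<in> V \<and> (\<forall>u\<in>V. \<forall>v\<in>V. u + v \<in> V) \<and>
      (\<forall>c. \<forall>u\<in>V. c \<cdot>\<^sub>v u \<in> V) \<and> (\<forall>g\<in>carrier G. \<forall>v\<in>V. 1\<^sub>m 1 *\<^sub>v v \<in> V)"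
  show "V = {0\<^sub>v 1} \<or> V = carrier_vec 1"
  proof (cases "V = {0\<^sub>v 1}")
    case False
    then obtain u where u: "u \<in> V" "u \<noteq> 0\<^sub>v 1" using V by blast
    have uc: "u \<in> carrier_vec 1" using u V by blast
    have u0: "u $ 0 \<noteq> 0"
    proof
      assume "u $ 0 = 0"
      hence "u = 0\<^sub>v 1" using uc by (intro eq_vecI) auto
      thus False using u by simp
    qed
    have "w \<in> V" if w: "w \<in> carrier_vec 1" for w
    proof -
      have "w = (w $ 0 / u $ 0) \<cdot>\<^sub>v u" using w uc u0 by (intro eq_vecI) auto
      moreover have "\<forall>c. \<forall>u\<in>V. c \<cdot>\<^sub>v u \<in> V" using V by blast
      ultimately show ?thesis using u(1) by metis
    qed
    thus ?thesis using V by blast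
  qed simp
qed auto

lemma Irr_nonzero_at_one:
  assumes "\<one>\<^bsub>G\<^esub> \<in> carrier G"
  shows "\<exists>M. M \<in> Irr G \<and> M \<one>\<^bsub>G\<^esub> \<noteq> 0"
proof -
  have "character G (\<lambda>_. 1\<^sub>m 1) \<in> Irr G" unfolding Irr_def using trivial_rep_irred by blast
  moreover have "character G (\<lambda>_. 1\<^sub>m 1) \<one>\<^bsub>G\<^esub> \<noteq> 0"
    unfolding character_def mtrace_def using assms by simp
  ultimately show ?thesis by blast
qed

lemma ind_char_from_one:
  assumes G: "group G" and g: "g \<in> carrier G"
  shows "ind_char G {\<one>\<^bsub>G\<^esub>} M g
           = (if g = \<one>\<^bsub>G\<^esub> then of_nat (card (carrier G)) * M \<one>\<^bsub>G\<^esub> else 0)"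
proof (cases "g = \<one>\<^bsub>G\<^esub>")
  case True
  have "\<forall>x\<in>carrier G. inv\<^bsub>G\<^esub> x \<otimes>\<^bsub>G\<^esub> g \<otimes>\<^bsub>G\<^esub> x = \<one>\<^bsub>G\<^esub>"
    using group.conj_one_iff[OF G] g True by blast
  hence "ind_char G {\<one>\<^bsub>G\<^esub>} M g = (\<Sum>x\<in>carrier G. M \<one>\<^bsub>G\<^esub>)"
    unfolding ind_char_def using g by simp
  then show ?thesis using True by simp
next
  case False
  have "\<forall>x\<in>carrier G. inv\<^bsub>G\<^esub> x \<otimes>\<^bsub>G\<^esub> g \<otimes>\<^bsub>G\<^esub> x \<noteq> \<one>\<^bsub>G\<^esub>"
    using group.conj_one_iff[OF G] g False by blast
  hence "ind_char G {\<one>\<^bsub>G\<^esub>} M g = 0" unfolding ind_char_def using g by simp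
  then show ?thesis using False by simp
qed

(* Hence, if M(1) \<noteq> 0, the induced character contains every irreducible character E:
   its inner product with E is M(1) times the degree of E. *)
lemma constituent_ind_from_one:
  assumes G: "group G" and fin: "finite (carrier G)" and M1: "M \<one>\<^bsub>G\<^esub> \<noteq> 0"
    and E: "E \<in> Irr G"
  shows "constituent G {\<one>\<^bsub>G\<^esub>} M E"
proof -
  obtain n \<rho> where irr: "irred_rep G n \<rho>" and ch: "E = character G \<rho>"
    using E unfolding Irr_def by blast
  have E1: "E \<one>\<^bsub>G\<^esub> = of_nat n" using irred_char_at_one[OF irr G] ch by simp
  have n0: "n > 0" using irr unfolding irred_rep_def by blast
  have one: "\<one>\<^bsub>G\<^esub> \<in> carrier G" using G by (simp add: group.is_monoid monoid.one_closed)
  define c where "c = card (carrier G)"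
  have c0: "c > 0" using fin one unfolding c_def card_gt_0_iff by blast
  have "(\<Sum>g\<in>carrier G. ind_char G {\<one>\<^bsub>G\<^esub>} M g * cnj (E g))
      = (\<Sum>g\<in>carrier G. if g = \<one>\<^bsub>G\<^esub> then of_nat c * M \<one>\<^bsub>G\<^esub> * cnj (E g) else 0)"
    by (rule sum.cong) (auto simp: ind_char_from_one[OF G] c_def)
  also have "\<dots> = of_nat c * M \<one>\<^bsub>G\<^esub> * cnj (E \<one>\<^bsub>G\<^esub>)"
    using fin one by (simp add: sum.delta)
  finally have "cinner G (ind_char G {\<one>\<^bsub>G\<^esub>} M) E = M \<one>\<^bsub>G\<^esub> * of_nat n"
    unfolding cinner_def c_def[symmetric] using c0 E1 by simp
  thus ?thesis unfolding constituent_def using M1 n0 by simp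
qed

section \<open>Coxeter systems and parabolic subgroups\<close>

lemma cox_facts:
  assumes "coxeter_system W S"
  shows "group W" "S \<subseteq> carrier W" "\<forall>s\<in>S. s \<otimes>\<^bsub>W\<^esub> s = \<one>\<^bsub>W\<^esub>"
  using assms[unfolded coxeter_system_def, THEN conjunct1]
    assms[unfolded coxeter_system_def, THEN conjunct2, THEN conjunct1]
    assms[unfolded coxeter_system_def, THEN conjunct2, THEN conjunct2, THEN conjunct2, THEN conjunct2, THEN conjunct1]
  by auto

lemma par_simps[simp]: "carrier (par W J) = generate W J" "monoid.mult (par W J) = monoid.mult W"
  "one (par W J) = one W"
  unfolding par_def by simp_all

lemma par_group: assumes W: "group W" and J: "J \<subseteq> carrier W" shows "group (par W J)"
proof -
  have "subgroup (generate W J) W" using group.generate_is_subgroup[OF W J] .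
  thus ?thesis unfolding par_def using group.subgroup_imp_group[OF W] by blast
qed

lemma parabolic_finite_group:
  assumes cox: "coxeter_system W S" and fin: "finite (carrier W)" and J: "J \<subseteq> S"
  shows "group (par W J)" "finite (carrier (par W J))"
proof -
  note cf = cox_facts[OF cox]
  have JW: "J \<subseteq> carrier W" using J cf(2) by blast
  show "group (par W J)" using par_group[OF cf(1) JW] .
  have "generate W J \<subseteq> carrier W" using group.generate_in_carrier[OF cf(1) JW] by blast
  thus "finite (carrier (par W J))" using fin finite_subset by simp
qed

lemma wprod_Cons: "wprod G (x # xs) = x \<otimes>\<^bsub>G\<^esub> wprod G xs"
  unfolding wprod_def by simp

lemma wprod_Nil: "wprod G [] = \<one>\<^bsub>G\<^esub>"
  unfolding wprod_def by simp

lemma wprod_closed: "monoid G \<Longrightarrow> set xs \<subseteq> carrier G \<Longrightarrow> wprod G xs \<in> carrier G"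
  by (induct xs) (auto simp: wprod_Cons wprod_Nil monoid.m_closed monoid.one_closed)

lemma wprod_append: assumes m: "monoid G"
  shows "set xs \<subseteq> carrier G \<Longrightarrow> set ys \<subseteq> carrier G \<Longrightarrow>
     wprod G (xs @ ys) = wprod G xs \<otimes>\<^bsub>G\<^esub> wprod G ys"
proof (induct xs)
  case Nil
  then show ?case using wprod_closed[OF m, of ys] m by (simp add: wprod_Nil monoid.l_one)
next
  case (Cons x xs)
  then show ?case using wprod_closed[OF m, of ys] wprod_closed[OF m, of xs] m
    by (simp add: wprod_Cons monoid.m_assoc)
qed

lemma wprod_par: "wprod (par W J) ws = wprod W ws"
  unfolding wprod_def par_def by simp

lemma generate_as_word:
  assumes W: "group W" and S: "S \<subseteq> carrier W"
    and invol: "\<forall>s\<in>S. s \<otimes>\<^bsub>W\<^esub> s = \<one>\<^bsub>W\<^esub>"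
    and J: "J \<subseteq> S" and w: "w \<in> generate W J"
  shows "\<exists>ws. set ws \<subseteq> J \<and> wprod W ws = w"
  using w
proof (induct rule: generate.induct)
  case one
  then show ?case by (intro exI[of _ "[]"]) (simp add: wprod_Nil)
next
  case (incl h)
  have "h \<in> carrier W" using incl J S by auto
  then show ?case using incl W
    by (intro exI[of _ "[h]"]) (simp add: wprod_Cons wprod_Nil group.is_monoid monoid.r_one)
next
  case (inv h)
  have hc: "h \<in> carrier W" using inv J S by auto
  have "inv\<^bsub>W\<^esub> h = h" using inv.hyps J invol hc W by (metis group.inv_equality subsetD)
  then show ?case using hc inv W
    by (intro exI[of _ "[h]"]) (simp add: wprod_Cons wprod_Nil group.is_monoid monoid.r_one)
next
  case (eng h1 h2)
  then obtain xs ys where "set xs \<subseteq> J" "wprod W xs = h1" "set ys \<subseteq> J" "wprod W ys = h2" by blast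
  moreover have "set xs \<subseteq> carrier W" "set ys \<subseteq> carrier W" using calculation J S by auto
  ultimately show ?case using wprod_append[OF group.is_monoid[OF W]]
    by (intro exI[of _ "xs @ ys"]) auto
qed

section \<open>The sign character\<close>

(* The group Z/2Z, realised on {0,1} :: nat so that it can serve as a test group in the
   universal property of the Coxeter presentation. *)
definition parity_group :: "nat monoid" where
  "parity_group = \<lparr>carrier = {0,1}, monoid.mult = (\<lambda>x y. (x + y) mod 2), one = 0\<rparr>"

lemma parity_group_simps[simp]:
  "carrier parity_group = {0,1}" "x \<otimes>\<^bsub>parity_group\<^esub> y = (x + y) mod 2" "\<one>\<^bsub>parity_group\<^esub> = 0"
  unfolding parity_group_def by simp_all

lemma group_parity_group: "group parity_group"
proof (rule groupI)
  fix x assume "x \<in> carrier parity_group"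
  thus "\<exists>y\<in>carrier parity_group. y \<otimes>\<^bsub>parity_group\<^esub> x = \<one>\<^bsub>parity_group\<^esub>"
    by (intro bexI[of _ x]) auto
qed (auto simp: mod_add_left_eq mod_add_right_eq add.assoc)

(* The Coxeter presentation yields a homomorphism W \<rightarrow> Z/2Z sending every generator to 1;
   all relations (st)^m(s,t) = 1 hold in Z/2Z since the image of st is 0. *)
lemma coxeter_sign_hom: assumes cox: "coxeter_system W S"
  shows "\<exists>h \<in> hom W parity_group. \<forall>s\<in>S. h s = 1"
proof -
  have U: "\<forall>(H :: nat monoid) f. group H \<and> f \<in> S \<rightarrow> carrier H
          \<and> (\<forall>s\<in>S. \<forall>t\<in>S. (f s \<otimes>\<^bsub>H\<^esub> f t) [^]\<^bsub>H\<^esub> (group.ord W (s \<otimes>\<^bsub>W\<^esub> t)) = \<one>\<^bsub>H\<^esub>)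
        \<longrightarrow> (\<exists>h \<in> hom W H. \<forall>s\<in>S. h s = f s)"
    using cox unfolding coxeter_system_def by blast
  have m: "monoid parity_group" using group_parity_group by (rule group.is_monoid)
  have "(1 \<otimes>\<^bsub>parity_group\<^esub> 1) [^]\<^bsub>parity_group\<^esub> k = \<one>\<^bsub>parity_group\<^esub>" for k :: nat
  proof -
    have "1 \<otimes>\<^bsub>parity_group\<^esub> 1 = \<one>\<^bsub>parity_group\<^esub>" by simp
    thus ?thesis using monoid.nat_pow_one[OF m] by simp
  qed
  moreover have "(\<lambda>s. 1::nat) \<in> S \<rightarrow> carrier parity_group" by simp
  ultimately show ?thesis using U[rule_format, of parity_group "\<lambda>s. 1"] group_parity_group by blast
qed

lemma parity_hom_wprod:
  assumes h: "h \<in> hom W parity_group" and W: "group W" and S: "S \<subseteq> carrier W"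
    and hs: "\<forall>s\<in>S. h s = 1" and ws: "set ws \<subseteq> S"
  shows "h (wprod W ws) = length ws mod 2"
  using ws
proof (induct ws)
  case Nil
  then show ?case using hom_one[OF h W group_parity_group] by (simp add: wprod_Nil)
next
  case (Cons x xs)
  have m: "monoid W" using W by (rule group.is_monoid)
  have x: "x \<in> carrier W" using Cons S by auto
  have xs: "wprod W xs \<in> carrier W" using wprod_closed[OF m, of xs] Cons S by auto
  have "h (wprod W (x # xs)) = h x \<otimes>\<^bsub>parity_group\<^esub> h (wprod W xs)"
    unfolding wprod_Cons using hom_mult[OF h x xs] .
  also have "\<dots> = (1 + length xs mod 2) mod 2" using Cons hs by simp
  also have "\<dots> = length (x # xs) mod 2" by (simp add: mod_Suc)
  finally show ?case .
qed

lemma parity_sign_mult: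
  assumes h: "h \<in> hom W parity_group" and x: "x \<in> carrier W" and y: "y \<in> carrier W"
  shows "(-1::complex) ^ h (x \<otimes>\<^bsub>W\<^esub> y) = (-1) ^ h x * (-1) ^ h y"
proof -
  have "h (x \<otimes>\<^bsub>W\<^esub> y) = (h x + h y) mod 2" using hom_mult[OF h x y] by simp
  thus ?thesis by (simp add: minus_one_power_iff)
qed

lemma sgn_char_eq:
  assumes h: "h \<in> hom W parity_group" and W: "group W" and S: "S \<subseteq> carrier W"
    and inv: "\<forall>s\<in>S. s \<otimes>\<^bsub>W\<^esub> s = \<one>\<^bsub>W\<^esub>" and hs: "\<forall>s\<in>S. h s = 1"
    and J: "J \<subseteq> S" and w: "w \<in> generate W J"
  shows "sgn_char (par W J) J w = (-1) ^ h w"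
proof -
  define P where "P = (\<lambda>n. \<exists>ws. length ws = n \<and> set ws \<subseteq> J \<and> wprod (par W J) ws = w)"
  obtain ws0 where "set ws0 \<subseteq> J" "wprod W ws0 = w" using generate_as_word[OF W S inv J w] by blast
  hence "P (length ws0)" unfolding P_def wprod_par by blast
  hence "P (Least P)" by (rule LeastI)
  then obtain ws where ws: "length ws = Least P" "set ws \<subseteq> J" "wprod W ws = w"
    unfolding P_def wprod_par by blast
  have "h w = length ws mod 2" using parity_hom_wprod[OF h W S hs, of ws] ws J by auto
  moreover have "len (par W J) J w = length ws" unfolding len_def using ws P_def by simp
  ultimately show ?thesis unfolding sgn_char_def by (simp add: minus_one_power_iff)
qed

(* E \<otimes> sgn is again irreducible: it is the character of the twist of E by the sign. *)
lemma tens_sgn_Irr: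
  assumes cox: "coxeter_system W S" and J: "J \<subseteq> S" and E: "E \<in> Irr (par W J)"
  shows "tens_sgn (par W J) J E \<in> Irr (par W J)"
proof -
  note cf = cox_facts[OF cox]
  obtain h where h: "h \<in> hom W parity_group" and hs: "\<forall>s\<in>S. h s = 1"
    using coxeter_sign_hom[OF cox] by blast
  define \<epsilon> where "\<epsilon> = (\<lambda>g. (-1::complex) ^ h g)"
  have JW: "J \<subseteq> carrier W" using J cf by auto
  have gc: "x \<in> carrier W" if "x \<in> generate W J" for x
    using group.generate_in_carrier[OF cf(1) JW that] .
  have em: "\<forall>x\<in>carrier (par W J). \<forall>y\<in>carrier (par W J).
      \<epsilon> (x \<otimes>\<^bsub>par W J\<^esub> y) = \<epsilon> x * \<epsilon> y"
    using parity_sign_mult[OF h] gc unfolding \<epsilon>_def by simp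
  have e1: "\<epsilon> \<one>\<^bsub>par W J\<^esub> = 1"
    using hom_one[OF h cf(1) group_parity_group] unfolding \<epsilon>_def by simp
  have eq: "\<forall>x\<in>carrier (par W J). \<epsilon> x * \<epsilon> x = 1"
    unfolding \<epsilon>_def by (simp add: power_add[symmetric])
  obtain n \<rho> where irr: "irred_rep (par W J) n \<rho>" and ch: "E = character (par W J) \<rho>"
    using E unfolding Irr_def by blast
  have r: "is_rep (par W J) n \<rho>" using irr unfolding irred_rep_def by blast
  have irr2: "irred_rep (par W J) n (\<lambda>g. \<epsilon> g \<cdot>\<^sub>m \<rho> g)" by (rule twist_irred[OF irr em e1 eq])
  have "character (par W J) (\<lambda>g. \<epsilon> g \<cdot>\<^sub>m \<rho> g) = tens_sgn (par W J) J E"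
  proof
    fix g
    show "character (par W J) (\<lambda>g. \<epsilon> g \<cdot>\<^sub>m \<rho> g) g = tens_sgn (par W J) J E g"
    proof (cases "g \<in> carrier (par W J)")
      case True
      have "sgn_char (par W J) J g = \<epsilon> g"
        unfolding \<epsilon>_def using sgn_char_eq[OF h cf(1) cf(2) cf(3) hs J] True by simp
      then show ?thesis using True mtrace_smult[OF rep_carrier[OF r True]]
        unfolding character_def tens_sgn_def ch by (simp add: mult.commute)
    next
      case False
      then show ?thesis unfolding character_def tens_sgn_def ch by simp
    qed
  qed
  thus ?thesis using irr2 unfolding Irr_def
    by (intro CollectI exI[of _ n] exI[of _ "\<lambda>g. \<epsilon> g \<cdot>\<^sub>m \<rho> g"]) simp
qed

section \<open>The recursion defining atilde\<close>

(* The values a_M over all irreducible characters M of proper parabolic subgroups W_K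
   that induce to F; the maximum of this set is the quantity a'_F of the paper. *)
definition lower_values :: "('a, 'b) monoid_scheme \<Rightarrow> ('a set \<Rightarrow> ('a \<Rightarrow> complex) \<Rightarrow> 'g)
    \<Rightarrow> 'a set \<Rightarrow> ('a \<Rightarrow> complex) \<Rightarrow> 'g set" where
  "lower_values W a J F = {a K M | K M. K \<subset> J \<and> M \<in> Irr (par W K)
                           \<and> constituent (par W J) (generate W K) M F}"

lemma at_fuel_Suc:
  fixes W :: "('a, 'b) monoid_scheme" and L :: "'a \<Rightarrow> 'g::linordered_ab_group_add"
    and J :: "'a set" and m :: nat
  assumes "J \<noteq> {}"
  defines "a' \<equiv> \<lambda>F. Max (lower_values W (at_fuel m W L) J F)"
  shows "at_fuel (Suc m) W L J E =
    (if a' (tens_sgn (par W J) J E) - a' E \<le> omega (par W J) J L E then a' E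
     else a' (tens_sgn (par W J) J E) - omega (par W J) J L E)"
  using assms unfolding lower_values_def by (simp add: Let_def)

lemma lower_values_cong:
  assumes "\<And>K M. K \<subset> J \<Longrightarrow> M \<in> Irr (par W K) \<Longrightarrow> a K M = b K M"
  shows "lower_values W a J F = lower_values W b J F"
  unfolding lower_values_def using assms by metis

lemma lower_valuesI:
  assumes "K \<subset> J" "M \<in> Irr (par W K)" "constituent (par W J) (generate W K) M F"
  shows "a K M \<in> lower_values W a J F"
  unfolding lower_values_def using assms by blast

lemma lower_values_finite:
  assumes cox: "coxeter_system W S" and fin: "finite (carrier W)" and J: "J \<subseteq> S"
  shows "finite (lower_values W a J F)"
proof -
  have "finite J" using J cox_facts(2)[OF cox] fin by (meson finite_subset)
  hence "finite (SIGMA K:Pow J. Irr (par W K))"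
    using J finite_Irr[OF parabolic_finite_group[OF cox fin]] by (intro finite_SigmaI) auto
  moreover have "lower_values W a J F \<subseteq> (\<lambda>(K,M). a K M) ` (SIGMA K:Pow J. Irr (par W K))"
    unfolding lower_values_def by auto
  ultimately show ?thesis using finite_subset by blast
qed

(* For J \<noteq> {} the empty subset contributes: a suitable M \<in> Irr(W_{}) induces to every F. *)
lemma lower_values_nonempty:
  assumes cox: "coxeter_system W S" and fin: "finite (carrier W)" and J: "J \<subseteq> S"
    and Jne: "J \<noteq> {}" and F: "F \<in> Irr (par W J)"
  shows "lower_values W a J F \<noteq> {}"
proof -
  have "\<one>\<^bsub>par W {}\<^esub> \<in> carrier (par W {})" by (simp add: generate.one)
  then obtain M where M: "M \<in> Irr (par W {})" "M \<one>\<^bsub>par W {}\<^esub> \<noteq> 0"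
    using Irr_nonzero_at_one by blast
  have "generate W {} = {\<one>\<^bsub>par W J\<^esub>}"
    using group.generate_empty[OF cox_facts(1)[OF cox]] by simp
  moreover have "constituent (par W J) {\<one>\<^bsub>par W J\<^esub>} M F"
    using constituent_ind_from_one[OF parabolic_finite_group[OF cox fin J] _ F] M by simp
  ultimately have "a {} M \<in> lower_values W a J F"
    using Jne M by (intro lower_valuesI) auto
  thus ?thesis by blast
qed

lemma recursion_rule_solution:
  fixes e x om :: "'g::linordered_ab_group_add"
  assumes A: "finite A" "A \<noteq> {}" and B: "finite B" "B \<noteq> {}"
    and upper_A: "\<forall>y\<in>A. y \<le> e" and upper_B: "\<forall>y\<in>B. y \<le> x"
    and diff: "x - e = om" and attained: "e \<in> A \<or> x \<in> B"
  shows "e = (if Max B - Max A \<le> om then Max A else Max B - om)"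
proof -
  have mA: "Max A \<le> e" and mB: "Max B \<le> x" using A B upper_A upper_B by simp_all
  show ?thesis
  proof (cases "e \<in> A")
    case True
    hence "Max A = e" using mA A by (simp add: antisym)
    moreover have "Max B - e \<le> om" using mB diff by (simp add: algebra_simps)
    ultimately show ?thesis by simp
  next
    case False
    hence "Max B = x" using attained mB B by (simp add: antisym)
    thus ?thesis using mA diff by (auto simp: algebra_simps)
  qed
qed

lemma a_eq_at_fuel_Suc:
  fixes L :: "'a \<Rightarrow> 'g::linordered_ab_group_add" and a :: "'a set \<Rightarrow> ('a \<Rightarrow> complex) \<Rightarrow> 'g"
  assumes cox: "coxeter_system W S" and fin: "finite (carrier W)"
    and A1: "\<forall>J K M E. J \<subseteq> S \<and> K \<subset> J \<and> M \<in> Irr (par W K) \<and> E \<in> Irr (par W J)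
               \<and> constituent (par W J) (generate W K) M E \<longrightarrow> a K M \<le> a J E"
    and A3: "\<forall>J E. J \<subseteq> S \<and> J \<noteq> {} \<and> E \<in> Irr (par W J) \<longrightarrow>
               (\<exists>K M. K \<subset> J \<and> M \<in> Irr (par W K) \<and>
                  ((constituent (par W J) (generate W K) M E \<and> a K M = a J E) \<or>
                   (constituent (par W J) (generate W K) M (tens_sgn (par W J) J E)
                      \<and> a K M = a J (tens_sgn (par W J) J E))))"
    and A4: "\<forall>J E. J \<subseteq> S \<and> E \<in> Irr (par W J) \<longrightarrow>
               a J (tens_sgn (par W J) J E) - a J E = omega (par W J) J L E"
    and IH: "\<And>K M. K \<subset> J \<Longrightarrow> M \<in> Irr (par W K) \<Longrightarrow> a K M = at_fuel m W L K M"
    and J: "J \<subseteq> S" "J \<noteq> {}" and E: "E \<in> Irr (par W J)"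
  shows "a J E = at_fuel (Suc m) W L J E"
proof -
  define Es where "Es = tens_sgn (par W J) J E"
  define om where "om = omega (par W J) J L E"
  have Es: "Es \<in> Irr (par W J)" unfolding Es_def using tens_sgn_Irr[OF cox J(1) E] .
  have upper: "\<forall>y\<in>lower_values W a J F. y \<le> a J F" if F: "F \<in> Irr (par W J)" for F
  proof
    fix y assume "y \<in> lower_values W a J F"
    then obtain K M where "y = a K M" "K \<subset> J" "M \<in> Irr (par W K)"
      "constituent (par W J) (generate W K) M F" unfolding lower_values_def by blast
    thus "y \<le> a J F" using A1[rule_format, of J K M F] J(1) F by simp
  qed
  obtain K M where "K \<subset> J" "M \<in> Irr (par W K)"
    "(constituent (par W J) (generate W K) M E \<and> a K M = a J E) \<or>
     (constituent (par W J) (generate W K) M Es \<and> a K M = a J Es)"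
    using A3[rule_format, of J E] J E unfolding Es_def by blast
  hence attained: "a J E \<in> lower_values W a J E \<or> a J Es \<in> lower_values W a J Es"
    using lower_valuesI[of K J M W] by metis
  have diff: "a J Es - a J E = om" using A4 J(1) E unfolding Es_def om_def by blast
  have lower_values_eq: "lower_values W (at_fuel m W L) J F = lower_values W a J F" for F
    using IH by (intro lower_values_cong) simp
  have "a J E = (if Max (lower_values W a J Es) - Max (lower_values W a J E) \<le> om
                 then Max (lower_values W a J E) else Max (lower_values W a J Es) - om)"
    by (rule recursion_rule_solution[OF lower_values_finite[OF cox fin J(1)]
          lower_values_nonempty[OF cox fin J E] lower_values_finite[OF cox fin J(1)]
          lower_values_nonempty[OF cox fin J Es] upper[OF E] upper[OF Es] diff attained])
  also have "\<dots> = at_fuel (Suc m) W L J E"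
    unfolding at_fuel_Suc[OF J(2)] lower_values_eq Es_def om_def ..
  finally show ?thesis .
qed

theorem mainTheorem5:
  fixes W :: "('a, 'b) monoid_scheme" and S :: "'a set"
    and L :: "'a \<Rightarrow> 'g::linordered_ab_group_add"
    and a :: "'a set \<Rightarrow> ('a \<Rightarrow> complex) \<Rightarrow> 'g"
  assumes cox: "coxeter_system W S" and fin: "finite (carrier W)"
    and wt: "weight_fun W S L" and pos: "\<forall>s\<in>S. 0 \<le> L s"
    and A0: "\<forall>E \<in> Irr (par W {}). a {} E = 0"
    and A1: "\<forall>J K M E. J \<subseteq> S \<and> K \<subset> J \<and> M \<in> Irr (par W K) \<and> E \<in> Irr (par W J)
               \<and> constituent (par W J) (generate W K) M E \<longrightarrow> a K M \<le> a J E"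
    and A2: "\<forall>J K M. J \<subseteq> S \<and> K \<subset> J \<and> M \<in> Irr (par W K) \<longrightarrow>
               (\<exists>E \<in> Irr (par W J). constituent (par W J) (generate W K) M E \<and> a K M = a J E)"
    and A3: "\<forall>J E. J \<subseteq> S \<and> J \<noteq> {} \<and> E \<in> Irr (par W J) \<longrightarrow>
               (\<exists>K M. K \<subset> J \<and> M \<in> Irr (par W K) \<and>
                  ((constituent (par W J) (generate W K) M E \<and> a K M = a J E) \<or>
                   (constituent (par W J) (generate W K) M (tens_sgn (par W J) J E)
                      \<and> a K M = a J (tens_sgn (par W J) J E))))"
    and A4: "\<forall>J E. J \<subseteq> S \<and> E \<in> Irr (par W J) \<longrightarrow>
               a J (tens_sgn (par W J) J E) - a J E = omega (par W J) J L E"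
  shows "\<forall>J E. J \<subseteq> S \<and> E \<in> Irr (par W J) \<longrightarrow> a J E = atilde W L J E"
proof -
  have finS: "finite S" using cox_facts(2)[OF cox] fin by (meson finite_subset)
  have "\<forall>J E. J \<subseteq> S \<and> card J \<le> m \<and> E \<in> Irr (par W J) \<longrightarrow> a J E = at_fuel m W L J E" for m
  proof (induction m)
    case 0
    have "J = {}" if "J \<subseteq> S" "card J \<le> 0" for J :: "'a set"
      using that finS finite_subset by fastforce
    thus ?case using A0 by auto
  next
    case (Suc m)
    have "a J E = at_fuel (Suc m) W L J E"
      if J: "J \<subseteq> S" "card J \<le> Suc m" and E: "E \<in> Irr (par W J)" and Jne: "J \<noteq> {}" for J E
    proof (rule a_eq_at_fuel_Suc[OF cox fin A1 A3 A4 _ J(1) Jne E])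
      fix K M assume "K \<subset> J" "M \<in> Irr (par W K)"
      moreover have "card K < card J"
        using \<open>K \<subset> J\<close> J(1) finS by (meson psubset_card_mono rev_finite_subset)
      ultimately show "a K M = at_fuel m W L K M" using Suc.IH J by auto
    qed
    thus ?case using A0 by (metis at_fuel.simps(2))
  qed
  thus ?thesis unfolding atilde_def by blast
qed

end
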